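(* Let $n,r\ge1$, $A_{-1}\in\mathbb{R}^{n\times n}$, $B\in\mathbb{R}^{n\times r}$, and let $A_2,A_3$ be $n\times n$ matrix functions on $[-1,0]$ with entries in $L_2([-1,0],\mathbb{C})$. Consider the neutral type system $$\dot z(t)=A_{-1}\dot z(t-1)+\int_{-1}^0A_2(\theta)\dot z(t+\theta)\,d\theta+\int_{-1}^0A_3(\theta)z(t+\theta)\,d\theta+Bu(t)$$ and its operator model $\dot x=\mathcal A x+\mathcal B u$ on $M_2$ described in the context. If the pair $(A_{-1},B)$ is not controllable, i.e. $\operatorname{rank}(B\ \ A_{-1}B\ \cdots\ A_{-1}^{n-1}B)<n$ (equivalently, there exist $\mu\in\sigma(A_{-1})$ and $y\in\mathbb{C}^n\setminus\{0\}$ with $A_{-1}^*y=\bar\mu y$ and $B^*y=0$), then the system is not exactly controllable at any time, i.e. $\mathcal R_T\neq\mathcal D(\mathcal A)$ for every $T>0$. (No assumption on invertibility of $A_{-1}$ is made.)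
   Context: The state space is $M_2=\mathbb{C}^n\times L_2(-1,0;\mathbb{C}^n)$. The operator $\mathcal A$ is defined by $\mathcal A(y,z(\cdot))=\big(Lz,\ \tfrac{d}{d\theta}z\big)$, where $Lz=\int_{-1}^0A_2(\theta)z'(\theta)\,d\theta+\int_{-1}^0A_3(\theta)z(\theta)\,d\theta$, on the domain $\mathcal D(\mathcal A)=\{(y,z(\cdot))\in M_2: z\in H^1(-1,0;\mathbb{C}^n),\ y=z(0)-A_{-1}z(-1)\}$; $\mathcal A$ generates a $C_0$-semigroup $e^{\mathcal At}$ on $M_2$. The control operator is $\mathcal Bu=(Bu,0)$ for $u\in\mathbb{C}^r$. The reachability set from $0$ at time $T$ is $\mathcal R_T=\{\int_0^Te^{\mathcal At}\mathcal Bu(t)\,dt: u\in L_2(0,T;\mathbb{C}^r)\}$. The system is exactly controllable at time $T$ if $\mathcal R_T=\mathcal D(\mathcal A)$ (equivalently, the set of restrictions to $[T-1,T]$ of solutions with zero initial data on $[-1,0]$, over all controls $u\in L_2(0,T;\mathbb{C}^r)$, equals $H^1(T-1,T;\mathbb{C}^n)$). *)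

theory Defs
  imports "HOL-Analysis.Analysis"
begin

definition L2_on :: "real \<Rightarrow> real \<Rightarrow> (real \<Rightarrow> 'a::{banach,second_countable_topology}) \<Rightarrow> bool" where
  "L2_on a b g \<longleftrightarrow>
     (\<lambda>t. indicator {a..b} t *\<^sub>R g t) \<in> borel_measurable lborel \<and>
     set_integrable lborel {a..b} (\<lambda>t. (norm (g t))\<^sup>2)"

definition H1_on :: "real \<Rightarrow> real \<Rightarrow> (real \<Rightarrow> 'a::{banach,second_countable_topology}) \<Rightarrow> bool" where
  "H1_on a b f \<longleftrightarrow>
     (\<exists>g. L2_on a b g \<and> (\<forall>t\<in>{a..b}. f t = f a + (LINT s:{a..t}|lborel. g s)))"

definition cmat :: "real^'m^'n \<Rightarrow> complex^'m^'n" where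
  "cmat M = (\<chi> i j. complex_of_real (M $ i $ j))"

primrec mpow :: "'a::semiring_1^'n^'n \<Rightarrow> nat \<Rightarrow> 'a^'n^'n" where
  "mpow A 0 = mat 1"
| "mpow A (Suc k) = A ** mpow A k"

text \<open>Rank of the Kalman matrix (B  A B  ...  A^(n-1) B): dimension of its column space.\<close>
definition kalman_rank :: "real^'n^'n \<Rightarrow> real^'r^'n \<Rightarrow> nat" where
  "kalman_rank A B = dim (span (\<Union>k<CARD('n). columns (mpow A k ** B)))"

definition neutral_solution ::
  "real^'n^'n \<Rightarrow> (real \<Rightarrow> complex^'n^'n) \<Rightarrow> (real \<Rightarrow> complex^'n^'n) \<Rightarrow> real^'r^'n
   \<Rightarrow> real \<Rightarrow> (real \<Rightarrow> complex^'r) \<Rightarrow> (real \<Rightarrow> complex^'n) \<Rightarrow> bool" where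
  "neutral_solution Am1 A2 A3 B T u z \<longleftrightarrow>
     (\<forall>t\<in>{-1..0}. z t = 0) \<and>
     (\<exists>w. L2_on (-1) T w \<and>
          (\<forall>t\<in>{-1..T}. z t = z (-1) + (LINT s:{-1..t}|lborel. w s)) \<and>
          (AE t in lborel. t \<in> {0..T} \<longrightarrow>
             w t = cmat Am1 *v w (t - 1)
                   + (LINT \<theta>:{-1..0}|lborel. A2 \<theta> *v w (t + \<theta>))
                   + (LINT \<theta>:{-1..0}|lborel. A3 \<theta> *v z (t + \<theta>))
                   + cmat B *v u t))"

text \<open>Restrictions to [T-1,T] (extended by 0 outside) of solutions with zero initial data,
  over all controls u in L2(0,T;C^r).\<close>
definition reach_restr ::
  "real^'n^'n \<Rightarrow> (real \<Rightarrow> complex^'n^'n) \<Rightarrow> (real \<Rightarrow> complex^'n^'n) \<Rightarrow> real^'r^'n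
   \<Rightarrow> real \<Rightarrow> (real \<Rightarrow> complex^'n) set" where
  "reach_restr Am1 A2 A3 B T =
     {(\<lambda>t. if t \<in> {T-1..T} then z t else 0) | u z.
        L2_on 0 T u \<and> neutral_solution Am1 A2 A3 B T u z}"

definition H1_restr :: "real \<Rightarrow> (real \<Rightarrow> complex^'n) set" where
  "H1_restr T = {f. H1_on (T-1) T f \<and> (\<forall>t. t \<notin> {T-1..T} \<longrightarrow> f t = 0)}"

definition exactly_controllable ::
  "real^'n^'n \<Rightarrow> (real \<Rightarrow> complex^'n^'n) \<Rightarrow> (real \<Rightarrow> complex^'n^'n) \<Rightarrow> real^'r^'n \<Rightarrow> real \<Rightarrow> bool" where
  "exactly_controllable Am1 A2 A3 B T \<longleftrightarrow> reach_restr Am1 A2 A3 B T = H1_restr T"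

end

theory Submission
  imports Defs
begin

text \<open>If \<open>(A\<^sub>-\<^sub>1, B)\<close> is not controllable, some \<open>p \<noteq> 0\<close> satisfies \<open>p A\<^sub>-\<^sub>1\<^sup>k B = 0\<close> for all \<open>k\<close>.
  Applying \<open>p A\<^sub>-\<^sub>1\<^sup>k\<close> to the neutral equation kills the control, and the distributed delay
  terms are bounded, so \<open>p A\<^sub>-\<^sub>1\<^sup>k z'(t) = p A\<^sub>-\<^sub>1\<^sup>k\<^sup>+\<^sup>1 z'(t - 1) + O(1)\<close>. Stepping forward one
  delay at a time from the zero initial data, every \<open>p A\<^sub>-\<^sub>1\<^sup>k z\<close> is Lipschitz on \<open>[-1, T]\<close>.
  But the \<open>H\<^sup>1\<close> target \<open>(t - (T - 1))\<^sup>3\<^sup>/\<^sup>4 p\<close> on \<open>[T - 1, T]\<close> pairs with \<open>p\<close> to a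
  non-Lipschitz function, so it is not reachable.\<close>

lemma mpow_mult_commute: "mpow A k ** A = A ** mpow A k"
  by (induction k) (simp_all add: matrix_mul_assoc[symmetric])

lemma columns_matrix_mult: "columns (A ** M) = (\<lambda>x. A *v x) ` columns M"
proof -
  have "A *v column i M = column i (A ** M)" for i
    by (simp add: column_def matrix_matrix_mult_def matrix_vector_mult_def vec_eq_iff)
  then show ?thesis by (auto simp: columns_def image_iff) metis
qed

definition krylov_span :: "real^'n^'n \<Rightarrow> real^'r^'n \<Rightarrow> nat \<Rightarrow> (real^'n) set" where
  "krylov_span A B j = span (\<Union>k<j. columns (mpow A k ** B))"

lemma kalman_rank_eq_dim_krylov_span:
  fixes A :: "real^'n^'n"
  shows "kalman_rank A B = dim (krylov_span A B CARD('n))"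
  by (simp add: kalman_rank_def krylov_span_def)

lemma krylov_span_mono: "i \<le> j \<Longrightarrow> krylov_span A B i \<subseteq> krylov_span A B j"
  unfolding krylov_span_def by (intro span_mono UN_mono) auto

lemma columns_mpow_Suc_mult:
  "columns (mpow A (Suc k) ** B) = (\<lambda>x. A *v x) ` columns (mpow A k ** B)"
  by (simp only: mpow.simps matrix_mul_assoc[symmetric] columns_matrix_mult)

lemma columns_mpow_mult_subset_krylov_span:
  "k < j \<Longrightarrow> columns (mpow A k ** B) \<subseteq> krylov_span A B j"
  unfolding krylov_span_def by (auto intro: span_base)

lemma matrix_vector_mult_krylov_span:
  "(\<lambda>x. A *v x) ` krylov_span A B j \<subseteq> krylov_span A B (Suc j)"
proof -
  have "(\<lambda>x. A *v x) ` krylov_span A B j = span (\<Union>k<j. columns (mpow A (Suc k) ** B))"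
    by (simp only: krylov_span_def span_linear_image[OF matrix_vector_mul_linear, symmetric]
        image_UN columns_mpow_Suc_mult)
  also have "\<dots> \<subseteq> krylov_span A B (Suc j)"
    unfolding krylov_span_def by (intro span_mono) auto
  finally show ?thesis .
qed

lemma krylov_span_Suc_Suc_eq:
  assumes "krylov_span A B j = krylov_span A B (Suc j)"
  shows "krylov_span A B (Suc (Suc j)) = krylov_span A B (Suc j)"
proof -
  let ?C = "\<lambda>k. columns (mpow A k ** B)" and ?K = "krylov_span A B"
  have "?C j \<subseteq> ?K j"
    using assms columns_mpow_mult_subset_krylov_span[of j "Suc j"] by simp
  then have new: "?C (Suc j) \<subseteq> ?K (Suc j)"
    using matrix_vector_mult_krylov_span[of A B j] unfolding columns_mpow_Suc_mult by blast
  have old: "(\<Union>k<Suc j. ?C k) \<subseteq> ?K (Suc j)"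
    unfolding krylov_span_def by (rule span_superset)
  have "(\<Union>k<Suc (Suc j). ?C k) = (\<Union>k<Suc j. ?C k) \<union> ?C (Suc j)"
    by (simp only: lessThan_Suc UN_insert Un_commute)
  with new old have "(\<Union>k<Suc (Suc j). ?C k) \<subseteq> ?K (Suc j)"
    by (simp only: Un_least)
  then have "?K (Suc (Suc j)) \<subseteq> ?K (Suc j)"
    unfolding krylov_span_def by (intro span_minimal subspace_span)
  then show ?thesis using krylov_span_mono[of "Suc j" "Suc (Suc j)" A B] by auto
qed

lemma krylov_span_eq_from:
  assumes "krylov_span A B j = krylov_span A B (Suc j)"
  shows "krylov_span A B (j + d) = krylov_span A B j"
proof -
  have step: "krylov_span A B (Suc (j + d)) = krylov_span A B (j + d)" for d
  proof (induction d)
    case 0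
    show ?case using assms by simp
  next
    case (Suc d)
    show ?case using krylov_span_Suc_Suc_eq[OF Suc[symmetric]] by simp
  qed
  show ?thesis by (induction d) (use step in simp_all)
qed

text \<open>A strictly increasing chain of subspaces of \<open>\<real>\<^sup>n\<close> has length at most \<open>n\<close>.\<close>
lemma krylov_span_Suc_CARD:
  fixes A :: "real^'n^'n"
  shows "krylov_span A B (Suc CARD('n)) = krylov_span A B CARD('n)"
proof (rule ccontr)
  let ?K = "krylov_span A B" and ?n = "CARD('n)"
  assume grows: "?K (Suc ?n) \<noteq> ?K ?n"
  have "?K j \<subset> ?K (Suc j)" if "j \<le> ?n" for j
  proof -
    have "?K j \<noteq> ?K (Suc j)"
      using grows krylov_span_eq_from[of A B j "?n - j"] krylov_span_eq_from[of A B j "Suc ?n - j"] that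
      by (auto simp: Suc_diff_le)
    then show ?thesis using krylov_span_mono[of j "Suc j" A B] by auto
  qed
  then have "j \<le> dim (?K j)" if "j \<le> Suc ?n" for j
    using that
  proof (induction j)
    case (Suc j)
    then have "dim (?K j) < dim (?K (Suc j))"
      unfolding krylov_span_def by (simp add: dim_psubset)
    with Suc show ?case by simp
  qed simp
  with dim_subset_UNIV_cart[of "?K (Suc ?n)"] show False by fastforce
qed

lemma columns_mpow_mult_subset_krylov_span_CARD:
  fixes A :: "real^'n^'n"
  shows "columns (mpow A k ** B) \<subseteq> krylov_span A B CARD('n)"
proof -
  have "krylov_span A B (Suc k) \<subseteq> krylov_span A B (CARD('n) + Suc k)"
    by (rule krylov_span_mono) simp
  also have "\<dots> = krylov_span A B CARD('n)"
    using krylov_span_eq_from[OF krylov_span_Suc_CARD[of A B, symmetric], of "Suc k"] by simp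
  finally show ?thesis using columns_mpow_mult_subset_krylov_span[of k "Suc k" A B] by blast
qed

lemma kalman_rank_deficient_obtains_annihilator:
  fixes A :: "real^'n^'n" and B :: "real^'r^'n"
  assumes "kalman_rank A B < CARD('n)"
  obtains p :: "real^'n" where "p \<noteq> 0" and "\<And>k. p v* (mpow A k ** B) = 0"
proof -
  have "dim (krylov_span A B CARD('n)) < DIM(real^'n)"
    using assms by (simp add: kalman_rank_eq_dim_krylov_span)
  then obtain p :: "real^'n" where p: "p \<noteq> 0" "\<And>y. y \<in> krylov_span A B CARD('n) \<Longrightarrow> orthogonal p y"
    unfolding krylov_span_def dim_span using orthogonal_to_subspace_exists by blast
  have "p v* (mpow A k ** B) = 0" for k
  proof -
    have "orthogonal p (column j (mpow A k ** B))" for j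
      using columns_mpow_mult_subset_krylov_span_CARD[of A k B] p(2) by (auto simp: columns_def)
    then show ?thesis
      by (simp add: vec_eq_iff vector_matrix_mult_def orthogonal_def inner_vec_def column_def mult.commute)
  qed
  with p that show ?thesis by blast
qed

lemma set_integral_shift:
  fixes f :: "real \<Rightarrow> 'a::{banach,second_countable_topology}"
  shows "(LINT \<theta>:{a..b}|lborel. f (t + \<theta>)) = (LINT x:{t+a..t+b}|lborel. f x)"
proof -
  have "(LINT x:{t+a..t+b}|lborel. f x)
      = (\<integral>x. indicator {t+a..t+b} (t + 1 * x) *\<^sub>R f (t + 1 * x) \<partial>lborel)"
    unfolding set_lebesgue_integral_def
    using lborel_integral_real_affine[of 1 "\<lambda>x. indicator {t+a..t+b} x *\<^sub>R f x" t] by simp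
  also have "\<dots> = (LINT \<theta>:{a..b}|lborel. f (t + \<theta>))"
    unfolding set_lebesgue_integral_def
    by (intro Bochner_Integration.integral_cong refl) (auto simp: indicator_def)
  finally show ?thesis by simp
qed

lemma set_integrable_shift_iff:
  fixes f :: "real \<Rightarrow> 'a::{banach,second_countable_topology}"
  shows "set_integrable lborel {a..b} (\<lambda>\<theta>. f (t + \<theta>)) \<longleftrightarrow> set_integrable lborel {t+a..t+b} f"
proof -
  have "set_integrable lborel {t+a..t+b} f \<longleftrightarrow>
      integrable lborel (\<lambda>x. indicator {t+a..t+b} (t + 1 * x) *\<^sub>R f (t + 1 * x))"
    unfolding set_integrable_def
    using lborel_integrable_real_affine_iff[of 1 "\<lambda>x. indicator {t+a..t+b} x *\<^sub>R f x" t] by simp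
  also have "\<dots> \<longleftrightarrow> set_integrable lborel {a..b} (\<lambda>\<theta>. f (t + \<theta>))"
    unfolding set_integrable_def
    by (intro Bochner_Integration.integrable_cong refl) (auto simp: indicator_def)
  finally show ?thesis by simp
qed

lemma set_integrable_const_Icc: "set_integrable lborel {a..b::real} (\<lambda>_. c::real)"
proof -
  have "integrable lborel (indicat_real {a..b})"
    by (cases "a \<le> b") (auto simp: integrable_indicator_iff ennreal_less_top)
  then show ?thesis unfolding set_integrable_def by (simp add: mult.commute)
qed

lemma set_integrable_sum:
  fixes f :: "'i \<Rightarrow> 'b \<Rightarrow> 'a::{banach,second_countable_topology}"
  assumes "\<And>i. i \<in> I \<Longrightarrow> set_integrable M A (f i)"
  shows "set_integrable M A (\<lambda>x. \<Sum>i\<in>I. f i x)"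
  unfolding set_integrable_def scaleR_sum_right
  by (intro Bochner_Integration.integrable_sum) (use assms in \<open>simp add: set_integrable_def\<close>)

lemma set_integral_Icc_mono_set:
  fixes f :: "real \<Rightarrow> real"
  assumes "set_integrable lborel {c..d} f" "\<And>x. x \<in> {c..d} \<Longrightarrow> 0 \<le> f x" "c \<le> a" "b \<le> d"
  shows "(LINT x:{a..b}|lborel. f x) \<le> (LINT x:{c..d}|lborel. f x)"
proof -
  have "set_integrable lborel {a..b} f"
    by (rule set_integrable_subset[OF assms(1)]) (use assms in auto)
  with assms show ?thesis unfolding set_integrable_def set_lebesgue_integral_def
    by (intro integral_mono) (auto simp: indicator_def)
qed

lemma set_integral_Icc_diff:
  fixes w :: "real \<Rightarrow> 'a::{banach,second_countable_topology}"
  assumes w: "set_integrable lborel {a..b} w" and "a \<le> s" "s \<le> t" "t \<le> b"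
  shows "(LINT x:{a..t}|lborel. w x) - (LINT x:{a..s}|lborel. w x) = (LINT x:{s..t}|lborel. w x)"
proof -
  have "{a..t} = {a..s} \<union> {s<..t}" using assms by auto
  moreover have "set_integrable lborel {a..s} w" "set_integrable lborel {s<..t} w"
    by (rule set_integrable_subset[OF w]; use assms in auto)+
  moreover have "{a..s} \<inter> {s<..t} = {}" by auto
  ultimately have "(LINT x:{a..t}|lborel. w x) = (LINT x:{a..s}|lborel. w x) + (LINT x:{s<..t}|lborel. w x)"
    by (simp add: set_integral_Un)
  moreover have "(LINT x:{s<..t}|lborel. w x) = (LINT x:{s..t}|lborel. w x)"
    by (rule set_integral_discrete_difference[where X="{s}"]) auto
  ultimately show ?thesis by simp
qed

lemma set_integral_bounded_linear:
  fixes f :: "'m \<Rightarrow> 'a::{banach,second_countable_topology}"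
    and L :: "'a \<Rightarrow> 'b::{banach,second_countable_topology}"
  assumes L: "bounded_linear L" and f: "set_integrable M A f"
  shows "set_integrable M A (\<lambda>x. L (f x))" and "L (LINT x:A|M. f x) = (LINT x:A|M. L (f x))"
proof -
  have scale: "L (indicator A x *\<^sub>R f x) = indicator A x *\<^sub>R L (f x)" for x
    using L by (simp add: linear_simps)
  have fI: "integrable M (\<lambda>x. indicator A x *\<^sub>R f x)"
    using f by (simp add: set_integrable_def)
  show "set_integrable M A (\<lambda>x. L (f x))"
    using integrable_bounded_linear[OF L fI] unfolding set_integrable_def scale .
  show "L (LINT x:A|M. f x) = (LINT x:A|M. L (f x))"
    using integral_bounded_linear[OF L fI] unfolding set_lebesgue_integral_def scale by simp
qed

lemma L2_on_imp_set_integrable: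
  fixes g :: "real \<Rightarrow> 'a::{banach,second_countable_topology}"
  assumes "L2_on a b g"
  shows "set_integrable lborel {a..b} g"
proof -
  have m: "(\<lambda>t. indicator {a..b} t *\<^sub>R g t) \<in> borel_measurable lborel"
    and sq: "set_integrable lborel {a..b} (\<lambda>t. (norm (g t))\<^sup>2)"
    using assms unfolding L2_on_def by auto
  have "set_integrable lborel {a..b} (\<lambda>t. 1 + (norm (g t))\<^sup>2)"
    using set_integral_add(1)[OF set_integrable_const_Icc sq] by simp
  then have I: "integrable lborel (\<lambda>t. indicator {a..b} t *\<^sub>R (1 + (norm (g t))\<^sup>2))"
    unfolding set_integrable_def .
  show ?thesis unfolding set_integrable_def
  proof (rule Bochner_Integration.integrable_bound[OF I m], rule AE_I2)
    fix t
    have "norm (g t) \<le> 1 + (norm (g t))\<^sup>2"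
      by (smt (verit) norm_ge_zero power2_eq_square mult_le_cancel_right1 zero_le_power2)
    then show "norm (indicator {a..b} t *\<^sub>R g t) \<le> norm (indicator {a..b} t *\<^sub>R (1 + (norm (g t))\<^sup>2))"
      by (auto simp: indicator_def)
  qed
qed

lemma set_integrable_has_integral_nonneg:
  fixes f :: "real \<Rightarrow> real"
  assumes f: "(f has_integral I) {a..b}" and nonneg: "\<And>x. x \<in> {a..b} \<Longrightarrow> 0 \<le> f x"
    and meas: "(\<lambda>x. indicator {a..b} x *\<^sub>R f x) \<in> borel_measurable lborel"
  shows "set_integrable lborel {a..b} f" and "(LINT x:{a..b}|lborel. f x) = I"
proof -
  have "f absolutely_integrable_on {a..b}"
    using f nonneg by (intro nonnegative_absolutely_integrable_1) (auto simp: integrable_on_def)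
  then show si: "set_integrable lborel {a..b} f"
    unfolding set_integrable_def using integrable_completion[OF meas] by simp
  show "(LINT x:{a..b}|lborel. f x) = I"
    using set_borel_integral_eq_integral(2)[OF si] f by (simp add: integral_unique)
qed

lemma set_integral_powr_diff:
  fixes a b q :: real
  assumes "q > -1" "a \<le> b"
  shows "set_integrable lborel {a..b} (\<lambda>x. (x - a) powr q)"
    and "(LINT x:{a..b}|lborel. (x - a) powr q) = (b - a) powr (q + 1) / (q + 1)"
proof -
  have "(\<lambda>x. indicator {0..b-a} x *\<^sub>R x powr q) \<in> borel_measurable lborel"
    by measurable
  note powr = set_integrable_has_integral_nonneg[OF has_integral_powr_from_0[OF assms(1)] _ this]
  have Icc: "{a + 0..a + (b - a)} = {a..b}" by simp
  show "set_integrable lborel {a..b} (\<lambda>x. (x - a) powr q)"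
    using set_integrable_shift_iff[of 0 "b-a" "\<lambda>x. (x - a) powr q" a] powr(1) assms
    unfolding Icc by simp
  show "(LINT x:{a..b}|lborel. (x - a) powr q) = (b - a) powr (q + 1) / (q + 1)"
    using set_integral_shift[of 0 "b-a" "\<lambda>x. (x - a) powr q" a] powr(2) assms
    unfolding Icc by simp
qed

lemma norm_matrix_vector_mult_le_sum_sq:
  fixes M :: "complex^'n^'m" and x :: "complex^'n"
  shows "norm (M *v x) \<le> ((\<Sum>i\<in>UNIV. \<Sum>j\<in>UNIV. (norm (M$i$j))\<^sup>2) + CARD('m) * CARD('n) * (norm x)\<^sup>2) / 2"
proof -
  have "norm (M *v x) \<le> (\<Sum>i\<in>UNIV. norm ((M *v x) $ i))"
    unfolding norm_vec_def by (rule L2_set_le_sum) simp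
  also have "\<dots> \<le> (\<Sum>i\<in>UNIV. \<Sum>j\<in>UNIV. ((norm (M$i$j))\<^sup>2 + (norm x)\<^sup>2) / 2)"
  proof (intro sum_mono)
    fix i
    have "norm ((M *v x) $ i) \<le> (\<Sum>j\<in>UNIV. norm (M$i$j) * norm (x$j))"
      unfolding matrix_vector_mult_def by (simp add: norm_mult[symmetric] norm_sum del: norm_mult)
    also have "\<dots> \<le> (\<Sum>j\<in>UNIV. ((norm (M$i$j))\<^sup>2 + (norm x)\<^sup>2) / 2)"
    proof (intro sum_mono)
      fix j
      have "norm (M$i$j) * norm (x$j) \<le> norm (M$i$j) * norm x"
        by (simp add: mult_left_mono Finite_Cartesian_Product.norm_nth_le)
      also have "\<dots> \<le> ((norm (M$i$j))\<^sup>2 + (norm x)\<^sup>2) / 2"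
        using sum_squares_bound[of "norm (M$i$j)" "norm x"] by (simp add: power2_eq_square)
      finally show "norm (M$i$j) * norm (x$j) \<le> ((norm (M$i$j))\<^sup>2 + (norm x)\<^sup>2) / 2" .
    qed
    finally show "norm ((M *v x) $ i) \<le> (\<Sum>j\<in>UNIV. ((norm (M$i$j))\<^sup>2 + (norm x)\<^sup>2) / 2)" .
  qed
  also have "\<dots> = ((\<Sum>i\<in>UNIV. \<Sum>j\<in>UNIV. (norm (M$i$j))\<^sup>2) + CARD('m) * CARD('n) * (norm x)\<^sup>2) / 2"
    by (simp add: sum.distrib sum_divide_distrib add_divide_distrib)
  finally show ?thesis .
qed

text \<open>By AM-GM the integrand is dominated by the squared kernel entries plus \<open>\<bar>h\<bar>\<^sup>2\<close>,
  whose integral over a window of length one is controlled uniformly in \<open>t\<close>.\<close>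
lemma norm_delay_integral_le:
  fixes A :: "real \<Rightarrow> complex^'n^'m" and h :: "real \<Rightarrow> complex^'n"
  assumes A: "set_integrable lborel {-1..0} (\<lambda>\<theta>. \<Sum>i\<in>UNIV. \<Sum>j\<in>UNIV. (norm (A \<theta>$i$j))\<^sup>2)"
    and H: "set_integrable lborel {-1..T} H" and h: "\<And>x. x \<in> {-1..T} \<Longrightarrow> (norm (h x))\<^sup>2 \<le> H x"
    and t: "t \<in> {0..T}"
  shows "norm (LINT \<theta>:{-1..0}|lborel. A \<theta> *v h (t + \<theta>))
    \<le> ((LINT \<theta>:{-1..0}|lborel. \<Sum>i\<in>UNIV. \<Sum>j\<in>UNIV. (norm (A \<theta>$i$j))\<^sup>2)
        + CARD('m) * CARD('n) * (LINT x:{-1..T}|lborel. H x)) / 2"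
proof -
  define F where "F \<theta> = (\<Sum>i\<in>UNIV. \<Sum>j\<in>UNIV. (norm (A \<theta>$i$j))\<^sup>2)" for \<theta>
  define N :: real where "N = CARD('m) * CARD('n)"
  have F: "set_integrable lborel {-1..0} F"
    unfolding F_def[abs_def] by (rule A)
  let ?Bd = "\<lambda>\<theta>. (F \<theta> + N * H (t + \<theta>)) / 2"
  have Ht: "set_integrable lborel {-1..0} (\<lambda>\<theta>. H (t + \<theta>))"
    unfolding set_integrable_shift_iff by (rule set_integrable_subset[OF H]) (use t in auto)
  have H_nonneg: "0 \<le> H x" if "x \<in> {-1..T}" for x
    using h[OF that] by (smt (verit) zero_le_power2)
  have "norm (LINT \<theta>:{-1..0}|lborel. A \<theta> *v h (t + \<theta>))
      \<le> (\<integral>\<theta>. norm (indicator {-1..0} \<theta> *\<^sub>R (A \<theta> *v h (t + \<theta>))) \<partial>lborel)"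
    unfolding set_lebesgue_integral_def by (rule integral_norm_bound)
  also have "\<dots> \<le> (\<integral>\<theta>. indicator {-1..0} \<theta> *\<^sub>R ?Bd \<theta> \<partial>lborel)"
  proof (intro integral_mono_AE' AE_I2)
    show "integrable lborel (\<lambda>\<theta>. indicator {-1..0} \<theta> *\<^sub>R ?Bd \<theta>)"
      using F Ht unfolding set_integrable_def[symmetric] by auto
    fix \<theta>
    show "0 \<le> indicator {-1..0} \<theta> *\<^sub>R ?Bd \<theta>"
      using H_nonneg[of "t + \<theta>"] t
      by (auto simp: indicator_def F_def N_def intro!: sum_nonneg add_nonneg_nonneg)
    have "\<theta> \<in> {-1..0} \<Longrightarrow> norm (A \<theta> *v h (t + \<theta>)) \<le> ?Bd \<theta>"
      using norm_matrix_vector_mult_le_sum_sq[of "A \<theta>" "h (t + \<theta>)"] h[of "t + \<theta>"] t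
      by (auto simp: F_def N_def intro: order_trans)
    then show "norm (indicator {-1..0} \<theta> *\<^sub>R (A \<theta> *v h (t + \<theta>))) \<le> indicator {-1..0} \<theta> *\<^sub>R ?Bd \<theta>"
      by (auto simp: indicator_def)
  qed
  also have "\<dots> = ((LINT \<theta>:{-1..0}|lborel. F \<theta>) + N * (LINT \<theta>:{-1..0}|lborel. H (t + \<theta>))) / 2"
    using F Ht unfolding set_lebesgue_integral_def[symmetric] by simp
  also have "(LINT \<theta>:{-1..0}|lborel. H (t + \<theta>)) \<le> (LINT x:{-1..T}|lborel. H x)"
    unfolding set_integral_shift
    by (rule set_integral_Icc_mono_set[OF H]) (use t H_nonneg in auto)
  finally show ?thesis by (simp add: F_def N_def divide_right_mono mult_left_mono)
qed

lemma delay_integral_bounded: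
  fixes A :: "real \<Rightarrow> complex^'n^'m" and h :: "real \<Rightarrow> complex^'n"
  assumes A: "\<forall>i j. L2_on (-1) 0 (\<lambda>\<theta>. A \<theta> $ i $ j)"
    and H: "set_integrable lborel {-1..T} H" and h: "\<And>x. x \<in> {-1..T} \<Longrightarrow> (norm (h x))\<^sup>2 \<le> H x"
  obtains C where "\<And>t. t \<in> {0..T} \<Longrightarrow> norm (LINT \<theta>:{-1..0}|lborel. A \<theta> *v h (t + \<theta>)) \<le> C"
proof -
  have "set_integrable lborel {-1..0} (\<lambda>\<theta>. \<Sum>i\<in>UNIV. \<Sum>j\<in>UNIV. (norm (A \<theta>$i$j))\<^sup>2)"
    using A by (intro set_integrable_sum) (auto simp: L2_on_def)
  from norm_delay_integral_le[OF this H h] that show ?thesis by blast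
qed

lemma norm_set_integral_Icc_le:
  fixes f :: "real \<Rightarrow> 'a::{banach,second_countable_topology}"
  assumes f: "set_integrable lborel {s..t} f" and "s \<le> t"
    and bound: "AE x\<in>{s..t} in lborel. norm (f x) \<le> G"
  shows "norm (LINT x:{s..t}|lborel. f x) \<le> G * (t - s)"
proof -
  have "norm (LINT x:{s..t}|lborel. f x) \<le> (LINT x:{s..t}|lborel. norm (f x))"
    by (rule set_integral_norm_bound[OF f])
  also have "\<dots> \<le> (LINT x:{s..t}|lborel. G)"
    by (rule set_integral_mono_AE[OF set_integrable_norm[OF f] set_integrable_const_Icc bound])
  also have "\<dots> = G * (t - s)"
    using set_integral_const[of "{s..t}" lborel G] \<open>s \<le> t\<close> by simp
  finally show ?thesis .
qed

locale integrated_signal =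
  fixes T :: real and w z :: "real \<Rightarrow> 'a::{banach,second_countable_topology}"
  assumes integrable_w: "set_integrable lborel {-1..T} w"
    and z_eq: "\<And>t. t \<in> {-1..T} \<Longrightarrow> z t = (LINT s:{-1..t}|lborel. w s)"
    and z_zero: "\<And>t. t \<in> {-1..0} \<Longrightarrow> z t = 0"
begin

lemma bounded_linear_increment:
  fixes L :: "'a \<Rightarrow> 'b::{banach,second_countable_topology}"
  assumes L: "bounded_linear L" and "-1 \<le> s" "s \<le> t" "t \<le> T"
  shows "set_integrable lborel {s..t} (\<lambda>r. L (w r))"
    and "L (z t) - L (z s) = (LINT r:{s..t}|lborel. L (w r))"
proof -
  have w: "set_integrable lborel {s..t} w"
    by (rule set_integrable_subset[OF integrable_w]) (use assms in auto)
  show "set_integrable lborel {s..t} (\<lambda>r. L (w r))"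
    by (rule set_integral_bounded_linear(1)[OF L w])
  have "L (z t) - L (z s) = L (z t - z s)"
    using L by (simp add: linear_simps)
  also have "z t - z s = (LINT r:{s..t}|lborel. w r)"
    using assms by (simp add: z_eq set_integral_Icc_diff[OF integrable_w])
  finally show "L (z t) - L (z s) = (LINT r:{s..t}|lborel. L (w r))"
    by (simp add: set_integral_bounded_linear(2)[OF L w])
qed

lemma norm_z_le:
  assumes "t \<in> {-1..T}"
  shows "norm (z t) \<le> (LINT s:{-1..T}|lborel. norm (w s))"
proof -
  have "norm (z t) \<le> (LINT s:{-1..t}|lborel. norm (w s))"
    unfolding z_eq[OF assms]
    by (rule set_integral_norm_bound, rule set_integrable_subset[OF integrable_w]) (use assms in auto)
  also have "\<dots> \<le> (LINT s:{-1..T}|lborel. norm (w s))"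
    by (rule set_integral_Icc_mono_set[OF set_integrable_norm[OF integrable_w]]) (use assms in auto)
  finally show ?thesis .
qed

lemma norm_increment_le_delayed:
  fixes L L' :: "'a \<Rightarrow> 'b::{banach,second_countable_topology}"
  assumes L: "bounded_linear L" and L': "bounded_linear L'"
    and delay: "AE t in lborel. t \<in> {0..T} \<longrightarrow> norm (L (w t) - L' (w (t - 1))) \<le> G"
    and st: "0 \<le> s" "s \<le> t" "t \<le> T"
  shows "norm (L (z t) - L (z s)) \<le> G * (t - s) + norm (L' (z (t - 1)) - L' (z (s - 1)))"
proof -
  have "-1 \<le> s" "-1 \<le> s - 1" "t - 1 \<le> T" "s - 1 \<le> t - 1" using st by simp_all
  note now = bounded_linear_increment[OF L this(1) st(2,3)]
    and before = bounded_linear_increment[OF L' this(2) this(4) this(3)]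
  have shifted: "set_integrable lborel {s..t} (\<lambda>r. L' (w (r - 1)))"
    "L' (z (t - 1)) - L' (z (s - 1)) = (LINT r:{s..t}|lborel. L' (w (r - 1)))"
    using before set_integrable_shift_iff[of s t "\<lambda>r. L' (w r)" "-1"]
      set_integral_shift[of s t "\<lambda>r. L' (w r)" "-1"] by simp_all
  have "AE r\<in>{s..t} in lborel. norm (L (w r) - L' (w (r - 1))) \<le> G"
    using delay by eventually_elim (use st in auto)
  then have bound: "norm (LINT r:{s..t}|lborel. L (w r) - L' (w (r - 1))) \<le> G * (t - s)"
    using now(1) shifted(1) st by (intro norm_set_integral_Icc_le set_integral_diff(1))
  have "L (z t) - L (z s)
      = (LINT r:{s..t}|lborel. L (w r) - L' (w (r - 1))) + (L' (z (t - 1)) - L' (z (s - 1)))"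
    using now shifted by (simp add: set_integral_diff(2))
  then have "norm (L (z t) - L (z s))
      \<le> norm (LINT r:{s..t}|lborel. L (w r) - L' (w (r - 1))) + norm (L' (z (t - 1)) - L' (z (s - 1)))"
    by (simp only: norm_triangle_ineq)
  with bound show ?thesis by linarith
qed

lemma lipschitz_on_step:
  fixes L L' :: "'a \<Rightarrow> 'b::{banach,second_countable_topology}"
  assumes L: "bounded_linear L" and L': "bounded_linear L'" and "0 \<le> G"
    and delay: "AE t in lborel. t \<in> {0..T} \<longrightarrow> norm (L (w t) - L' (w (t - 1))) \<le> G"
    and lip: "M-lipschitz_on {-1..b} (\<lambda>t. L' (z t))"
    and c: "c \<le> T" "c \<le> b + 1"
  shows "(M + G)-lipschitz_on {-1..c} (\<lambda>t. L (z t))"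
proof (rule lipschitz_on_leI)
  have "0 \<le> M" by (rule lipschitz_on_nonneg[OF lip])
  with \<open>0 \<le> G\<close> show "0 \<le> M + G" by simp
  fix s t assume s: "s \<in> {-1..c}" and t: "t \<in> {-1..c}" and "s \<le> t"
  show "dist (L (z s)) (L (z t)) \<le> (M + G) * dist s t"
  proof (cases "t \<le> 0")
    case True
    then show ?thesis using s \<open>s \<le> t\<close> \<open>0 \<le> M + G\<close> L by (simp add: z_zero linear_simps)
  next
    case False
    define s' where "s' = max s 0"
    have "z s = z s'" using s by (cases "s \<le> 0") (simp_all add: z_zero s'_def)
    have "norm (L (z t) - L (z s')) \<le> G * (t - s') + norm (L' (z (t - 1)) - L' (z (s' - 1)))"
      using False t c \<open>s \<le> t\<close> by (intro norm_increment_le_delayed[OF L L' delay]) (auto simp: s'_def)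
    also have "\<dots> \<le> G * (t - s') + M * (t - s')"
      using lipschitz_on_normD[OF lip, of "t - 1" "s' - 1"] False t c \<open>s \<le> t\<close> by (auto simp: s'_def)
    also have "\<dots> = (M + G) * (t - s')" by (simp add: algebra_simps)
    also have "\<dots> \<le> (M + G) * (t - s)"
      using \<open>0 \<le> M + G\<close> by (intro mult_left_mono) (auto simp: s'_def)
    finally show ?thesis
      using \<open>z s = z s'\<close> \<open>s \<le> t\<close> by (simp add: dist_norm dist_real_def norm_minus_commute)
  qed
qed

lemma lipschitz_on_delay_chain:
  fixes L :: "nat \<Rightarrow> 'a \<Rightarrow> 'b::{banach,second_countable_topology}"
  assumes L: "\<And>k. bounded_linear (L k)"
    and delay: "\<And>k. \<exists>G. AE t in lborel. t \<in> {0..T} \<longrightarrow> norm (L k (w t) - L (Suc k) (w (t - 1))) \<le> G"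
  obtains M where "M-lipschitz_on {-1..T} (\<lambda>t. L k (z t))"
proof -
  have steps: "\<forall>k. \<exists>M. M-lipschitz_on {-1..min T (real n)} (\<lambda>t. L k (z t))" for n
  proof (induction n)
    case 0
    have "0-lipschitz_on {-1..min T 0} (\<lambda>t. L k (z t))" for k
      using L[of k] by (intro lipschitz_onI) (auto simp: z_zero linear_simps)
    then show ?case by auto
  next
    case (Suc n)
    show ?case
    proof
      fix k
      obtain M where "M-lipschitz_on {-1..min T (real n)} (\<lambda>t. L (Suc k) (z t))"
        using Suc.IH by blast
      moreover obtain G where G: "AE t in lborel. t \<in> {0..T} \<longrightarrow> norm (L k (w t) - L (Suc k) (w (t - 1))) \<le> G"
        using delay by blast
      then have "AE t in lborel. t \<in> {0..T} \<longrightarrow> norm (L k (w t) - L (Suc k) (w (t - 1))) \<le> max G 0"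
        by eventually_elim auto
      ultimately have "(M + max G 0)-lipschitz_on {-1..min T (real (Suc n))} (\<lambda>t. L k (z t))"
        by (intro lipschitz_on_step[OF L L]) auto
      then show "\<exists>M. M-lipschitz_on {-1..min T (real (Suc n))} (\<lambda>t. L k (z t))" ..
    qed
  qed
  obtain n :: nat where "T \<le> real n" using real_arch_simple by blast
  with steps[of n] that show ?thesis by (auto simp: min_absorb1)
qed

end

lemma bounded_linear_AE_bound:
  fixes L :: "'a::real_normed_vector \<Rightarrow> 'b::real_normed_vector"
  assumes L: "bounded_linear L" and bound: "AE x in M. P x \<longrightarrow> norm (f x) \<le> C"
  shows "\<exists>G. AE x in M. P x \<longrightarrow> norm (L (f x)) \<le> G"
proof -
  obtain K where K: "\<And>y. norm (L y) \<le> norm y * K" "0 < K"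
    using bounded_linear.pos_bounded[OF L] by blast
  have "AE x in M. P x \<longrightarrow> norm (L (f x)) \<le> C * K"
    using bound
  proof eventually_elim
    case (elim x)
    show ?case
      using elim K order_trans[OF K(1) mult_right_mono] by (simp add: less_imp_le)
  qed
  then show ?thesis ..
qed

definition pairing :: "real^'n \<Rightarrow> complex^'n \<Rightarrow> complex" where
  "pairing r x = (\<Sum>i\<in>UNIV. complex_of_real (r $ i) * x $ i)"

lemma bounded_linear_pairing: "bounded_linear (pairing r)"
  unfolding pairing_def
  by (intro bounded_linear_sum bounded_linear_compose[OF bounded_linear_mult_right] bounded_linear_vec_nth)

lemma pairing_cmat_mult: "pairing r (cmat M *v x) = pairing (r v* M) x"
  unfolding pairing_def cmat_def matrix_vector_mult_def vector_matrix_mult_def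
  by (simp add: sum_distrib_left sum_distrib_right mult.assoc mult.commute mult.left_commute)
     (rule sum.swap)

lemma pairing_zero_left [simp]: "pairing 0 x = 0"
  by (simp add: pairing_def)

lemma pairing_zero_right [simp]: "pairing r 0 = 0"
  by (simp add: pairing_def)

lemma pairing_scaleR_of_real:
  "pairing p (c *\<^sub>R (\<chi> i. complex_of_real (p $ i))) = complex_of_real (c * (p \<bullet> p))"
  unfolding pairing_def inner_vec_def vector_scaleR_component vec_lambda_beta
  by (simp add: sum_distrib_left scaleR_conv_of_real mult.commute mult.left_commute)

lemma neutral_equation_perturbation_bounded:
  fixes Am1 :: "real^'n^'n" and B :: "real^'r^'n" and A2 A3 :: "real \<Rightarrow> complex^'n^'n"
  assumes A2: "\<forall>i j. L2_on (-1) 0 (\<lambda>\<theta>. A2 \<theta> $ i $ j)"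
    and A3: "\<forall>i j. L2_on (-1) 0 (\<lambda>\<theta>. A3 \<theta> $ i $ j)"
    and w: "L2_on (-1) T w" and z: "integrated_signal T w z"
    and equation: "AE t in lborel. t \<in> {0..T} \<longrightarrow>
             w t = cmat Am1 *v w (t - 1)
                   + (LINT \<theta>:{-1..0}|lborel. A2 \<theta> *v w (t + \<theta>))
                   + (LINT \<theta>:{-1..0}|lborel. A3 \<theta> *v z (t + \<theta>))
                   + cmat B *v u t"
  obtains C where "AE t in lborel. t \<in> {0..T} \<longrightarrow> norm (w t - cmat Am1 *v w (t - 1) - cmat B *v u t) \<le> C"
proof -
  interpret integrated_signal T w z by (rule z)
  define Cz where "Cz = (LINT s:{-1..T}|lborel. norm (w s))"
  have "set_integrable lborel {-1..T} (\<lambda>s. (norm (w s))\<^sup>2)"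
    using w by (simp add: L2_on_def)
  then obtain C2 where C2: "\<And>t. t \<in> {0..T} \<Longrightarrow> norm (LINT \<theta>:{-1..0}|lborel. A2 \<theta> *v w (t + \<theta>)) \<le> C2"
    using delay_integral_bounded[OF A2] by blast
  have "(norm (z t))\<^sup>2 \<le> Cz\<^sup>2" if "t \<in> {-1..T}" for t
    using norm_z_le[OF that] unfolding Cz_def by (intro power_mono) auto
  then obtain C3 where C3: "\<And>t. t \<in> {0..T} \<Longrightarrow> norm (LINT \<theta>:{-1..0}|lborel. A3 \<theta> *v z (t + \<theta>)) \<le> C3"
    using delay_integral_bounded[OF A3 set_integrable_const_Icc] by blast
  have "AE t in lborel. t \<in> {0..T} \<longrightarrow> norm (w t - cmat Am1 *v w (t - 1) - cmat B *v u t) \<le> C2 + C3"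
    using equation
  proof eventually_elim
    case (elim t)
    show ?case
      using elim C2[of t] C3[of t] norm_triangle_le[OF add_mono] by (auto simp: algebra_simps)
  qed
  then show ?thesis by (rule that)
qed

text \<open>Along the functionals \<open>p A\<^sub>-\<^sub>1\<^sup>k\<close> the control term vanishes and \<open>A\<^sub>-\<^sub>1\<close> becomes the
  shift \<open>k \<mapsto> k + 1\<close>, which is exactly the shape required by the method of steps.\<close>
lemma neutral_solution_pairing_lipschitz:
  fixes Am1 :: "real^'n^'n" and B :: "real^'r^'n" and A2 A3 :: "real \<Rightarrow> complex^'n^'n"
  assumes A2: "\<forall>i j. L2_on (-1) 0 (\<lambda>\<theta>. A2 \<theta> $ i $ j)"
    and A3: "\<forall>i j. L2_on (-1) 0 (\<lambda>\<theta>. A3 \<theta> $ i $ j)"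
    and p: "\<And>k. p v* (mpow Am1 k ** B) = 0"
    and sol: "neutral_solution Am1 A2 A3 B T u z"
  obtains M where "M-lipschitz_on {-1..T} (\<lambda>t. pairing p (z t))"
proof -
  obtain w where w: "L2_on (-1) T w"
    and z_eq: "\<And>t. t \<in> {-1..T} \<Longrightarrow> z t = z (-1) + (LINT s:{-1..t}|lborel. w s)"
    and equation: "AE t in lborel. t \<in> {0..T} \<longrightarrow>
             w t = cmat Am1 *v w (t - 1)
                   + (LINT \<theta>:{-1..0}|lborel. A2 \<theta> *v w (t + \<theta>))
                   + (LINT \<theta>:{-1..0}|lborel. A3 \<theta> *v z (t + \<theta>))
                   + cmat B *v u t"
    and z_zero: "\<And>t. t \<in> {-1..0} \<Longrightarrow> z t = 0"
    using sol unfolding neutral_solution_def by blast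
  have z: "integrated_signal T w z"
    using L2_on_imp_set_integrable[OF w] z_eq z_zero[of "-1"] z_zero
    by unfold_locales simp_all
  obtain C where C: "AE t in lborel. t \<in> {0..T} \<longrightarrow> norm (w t - cmat Am1 *v w (t - 1) - cmat B *v u t) \<le> C"
    using neutral_equation_perturbation_bounded[OF A2 A3 w z equation] .
  define L where "L k = pairing (p v* mpow Am1 k)" for k
  have L: "bounded_linear (L k)" for k
    unfolding L_def by (rule bounded_linear_pairing)
  have decompose: "L k (w t) - L (Suc k) (w (t - 1)) = L k (w t - cmat Am1 *v w (t - 1) - cmat B *v u t)"
    for k t
    using L[of k] p[of k]
    by (simp add: L_def linear_simps pairing_cmat_mult vector_matrix_mul_assoc mpow_mult_commute)
  have delay: "\<exists>G. AE t in lborel. t \<in> {0..T} \<longrightarrow> norm (L k (w t) - L (Suc k) (w (t - 1))) \<le> G" for k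
    unfolding decompose by (rule bounded_linear_AE_bound[OF L C])
  obtain M where "M-lipschitz_on {-1..T} (\<lambda>t. L 0 (z t))"
    by (rule integrated_signal.lipschitz_on_delay_chain[where L = L and k = 0, OF z L delay])
  then show ?thesis using that by (simp add: L_def)
qed

text \<open>The exponent \<open>3/4\<close> is chosen so that the ramp lies in \<open>H\<^sup>1\<close> (its derivative
  \<open>\<sim> s\<^sup>-\<^sup>1\<^sup>/\<^sup>4\<close> is square integrable) without being Lipschitz at \<open>T - 1\<close>.\<close>
definition power_ramp :: "real \<Rightarrow> complex^'n \<Rightarrow> real \<Rightarrow> complex^'n" where
  "power_ramp T e t = (if t \<in> {T-1..T} then ((t - (T - 1)) powr (3/4)) *\<^sub>R e else 0)"

lemma power_ramp_in_H1_restr: "power_ramp T e \<in> H1_restr T"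
proof -
  define a where "a = T - 1"
  define c where "c s = 3/4 * (s - a) powr (-1/4)" for s
  define g where "g s = c s *\<^sub>R e" for s
  have c: "set_integrable lborel {a..t} c" "(LINT s:{a..t}|lborel. c s) = (t - a) powr (3/4)"
    if "a \<le> t" for t
    unfolding c_def using set_integral_powr_diff[of "-1/4" a t] that by simp_all
  have sq_eq: "9/16 * (norm e)\<^sup>2 * (x - a) powr (-1/2) = (norm (g x))\<^sup>2" if "x \<in> {a..T}" for x
  proof -
    have "((x - a) powr (-1/4))\<^sup>2 = (x - a) powr (-1/2)"
      using that by (simp add: power2_eq_square powr_add[symmetric])
    then have "(c x)\<^sup>2 = 9/16 * (x - a) powr (-1/2)"
      unfolding c_def by (simp add: power_mult_distrib power_divide)
    then show ?thesis unfolding g_def by (simp add: power_mult_distrib)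
  qed
  have "set_integrable lborel {a..T} (\<lambda>x. 9/16 * (norm e)\<^sup>2 * (x - a) powr (-1/2))"
    using set_integral_powr_diff(1)[of "-1/2" a T] by (simp add: a_def)
  then have "set_integrable lborel {a..T} (\<lambda>x. (norm (g x))\<^sup>2)"
    by (rule set_integrable_cong[THEN iffD1, OF refl refl sq_eq, rotated])
  moreover have "(\<lambda>t. indicator {a..T} t *\<^sub>R g t) \<in> borel_measurable lborel"
    unfolding g_def c_def by measurable
  ultimately have g: "L2_on a T g" by (simp add: L2_on_def)
  have ramp_a: "power_ramp T e a = 0"
    by (simp add: power_ramp_def a_def)
  have ramp_eq: "power_ramp T e t = power_ramp T e a + (LINT s:{a..t}|lborel. g s)" if "t \<in> {a..T}" for t
  proof -
    have "(\<lambda>x. indicator {a..t} x *\<^sub>R g x) = (\<lambda>x. (indicator {a..t} x * c x) *\<^sub>R e)"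
      unfolding g_def by (auto simp: indicator_def)
    then have "(LINT s:{a..t}|lborel. g s) = (LINT s:{a..t}|lborel. c s) *\<^sub>R e"
      using c(1)[of t] that unfolding set_lebesgue_integral_def set_integrable_def
      by simp
    moreover have "power_ramp T e t = (t - a) powr (3/4) *\<^sub>R e"
      using that by (simp add: power_ramp_def a_def)
    ultimately show ?thesis using c(2)[of t] that by (simp add: ramp_a)
  qed
  have "H1_on a T (power_ramp T e)"
    unfolding H1_on_def by (intro exI[of _ g] conjI g ballI ramp_eq)
  moreover have "\<forall>t. t \<notin> {T-1..T} \<longrightarrow> power_ramp T e t = 0"
    by (simp add: power_ramp_def)
  ultimately show ?thesis unfolding H1_restr_def a_def by (intro CollectI conjI)
qed

lemma powr_three_quarters_not_lipschitz:
  fixes c M :: real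
  assumes "0 < c"
  obtains x where "x \<in> {0..1}" "M * x < c * x powr (3/4)"
proof -
  define y where "y = c / (\<bar>M\<bar> + c)"
  have y: "0 < y" "y \<le> 1"
    using assms by (auto simp: y_def)
  have "y * (\<bar>M\<bar> + c) = c"
    using assms by (simp add: y_def)
  then have "\<bar>M\<bar> * y = c - c * y" by (simp add: algebra_simps)
  then have "M * y < c"
    using mult_pos_pos[OF assms y(1)] abs_ge_self[of M] mult_right_mono[of M "\<bar>M\<bar>" y] y(1)
    by linarith
  have powers: "M * y ^ 4 = y ^ 3 * (M * y)" "c * y ^ 3 = y ^ 3 * c"
    by (simp_all add: power3_eq_cube power4_eq_xxxx)
  have "y ^ 3 * (M * y) < y ^ 3 * c"
    using mult_strict_left_mono[OF \<open>M * y < c\<close>, of "y ^ 3"] y by simp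
  then have "M * y ^ 4 < c * y ^ 3" unfolding powers .
  moreover have "(y ^ 4) powr (3/4) = y ^ 3"
  proof -
    have "(y ^ 4) powr (3/4) = (y powr 4) powr (3/4)" using y by (simp add: powr_realpow)
    also have "\<dots> = y powr 3" by (simp add: powr_powr)
    also have "\<dots> = y ^ 3" using y by (simp add: powr_realpow)
    finally show ?thesis .
  qed
  ultimately show ?thesis
    using y by (intro that[of "y ^ 4"]) (auto simp: power_le_one)
qed

theorem theorem3:
  fixes Am1 :: "real^'n^'n" and B :: "real^'r^'n"
    and A2 A3 :: "real \<Rightarrow> complex^'n^'n"
  assumes A2_L2: "\<forall>i j. L2_on (-1) 0 (\<lambda>\<theta>. A2 \<theta> $ i $ j)"
      and A3_L2: "\<forall>i j. L2_on (-1) 0 (\<lambda>\<theta>. A3 \<theta> $ i $ j)"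
      and not_ctrb: "kalman_rank Am1 B < CARD('n)"
  shows "\<forall>T>0. \<not> exactly_controllable Am1 A2 A3 B T"
proof (intro allI impI notI)
  fix T :: real
  assume "T > 0" and exact: "exactly_controllable Am1 A2 A3 B T"
  obtain p :: "real^'n" where "p \<noteq> 0" and p: "\<And>k. p v* (mpow Am1 k ** B) = 0"
    using kalman_rank_deficient_obtains_annihilator[OF not_ctrb] by blast
  define e :: "complex^'n" where "e = (\<chi> i. complex_of_real (p $ i))"
  have "power_ramp T e \<in> reach_restr Am1 A2 A3 B T"
    using exact power_ramp_in_H1_restr unfolding exactly_controllable_def by blast
  then obtain u z where sol: "neutral_solution Am1 A2 A3 B T u z"
    and ramp: "power_ramp T e = (\<lambda>t. if t \<in> {T-1..T} then z t else 0)"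
    unfolding reach_restr_def by blast
  obtain M where lip: "M-lipschitz_on {-1..T} (\<lambda>t. pairing p (z t))"
    using neutral_solution_pairing_lipschitz[OF A2_L2 A3_L2 p sol] .
  obtain x where x: "x \<in> {0..1}" "M * x < (p \<bullet> p) * x powr (3/4)"
    using powr_three_quarters_not_lipschitz \<open>p \<noteq> 0\<close> by (metis inner_gt_zero_iff)
  have "z (T - 1 + x) = x powr (3/4) *\<^sub>R e" "z (T - 1) = 0"
    using fun_cong[OF ramp, of "T - 1 + x"] fun_cong[OF ramp, of "T - 1"] x
    by (simp_all add: power_ramp_def)
  then have "pairing p (z (T - 1 + x)) - pairing p (z (T - 1)) = complex_of_real (x powr (3/4) * (p \<bullet> p))"
    by (simp add: e_def pairing_scaleR_of_real del: of_real_mult)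
  then have "norm (pairing p (z (T - 1 + x)) - pairing p (z (T - 1))) = (p \<bullet> p) * x powr (3/4)"
    by (simp add: abs_mult del: of_real_mult)
  moreover have "norm (pairing p (z (T - 1 + x)) - pairing p (z (T - 1))) \<le> M * x"
    using lipschitz_on_normD[OF lip, of "T - 1 + x" "T - 1"] x \<open>T > 0\<close> by simp
  ultimately show False using x(2) by linarith
qed

end
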